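(* Let $r,r'\sim\mathcal N(\mu,\Sigma)$ be i.i.d. Gaussian random vectors in $\mathbb R^{|r|}$ and let $x=f(r)\in\{1,\dots,|r|\}$ for an arbitrary (measurable) function $f$. For each index $z$ let $\sigma_{\eta_z}:=\sqrt{\Sigma_{zz}}$ denote the standard deviation of $r_z$. Then $$\mathbb E[|r_x-\mu_x|]\le\sqrt{\mathbb E[\sigma_{\eta_x}^2]\cdot(2\log(2|r|)+2)}\quad\text{and}\quad \mathbb E[|r_x-r'_x|]\le\beta\sqrt{\mathbb E[\sigma_{\eta_x}^2]},$$ where $\beta:=1+\sqrt{2\log(2|r|)+2}$.
   Context: $|r|$ denotes the dimension (number of entries) of the vector $r$; $\sigma_{\eta_x}$ is the standard deviation of the coordinate indexed by the random index $x$. *)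

theory Defs
  imports "HOL-Probability.Probability"
begin

text \<open>This covers degenerate (singular) covariance matrices.\<close>
definition gaussian_vec ::
  "'a measure \<Rightarrow> ('a \<Rightarrow> real^'n) \<Rightarrow> real^'n \<Rightarrow> real^'n^'n \<Rightarrow> bool" where
  "gaussian_vec M r \<mu> \<Sigma> \<longleftrightarrow>
     r \<in> borel_measurable M \<and>
     (\<forall>i j. \<Sigma> $ i $ j = \<Sigma> $ j $ i) \<and>
     (\<forall>a. 0 \<le> a \<bullet> (\<Sigma> *v a)) \<and>
     (\<forall>t. (LINT \<omega>|M. cis (t \<bullet> r \<omega>)) =
          cis (t \<bullet> \<mu>) * complex_of_real (exp (- (t \<bullet> (\<Sigma> *v t)) / 2)))"

end

theory Submission
  imports Defs
begin

(* Let g_j = (r_j - mu_j) / sigma_j be the standardized coordinates. Since r_x - mu_x = sigma_x g_x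
   almost surely, Cauchy-Schwarz gives E|r_x - mu_x| <= sqrt (E sigma_x^2 * E g_x^2), so it suffices to
   bound the second moment of g at the random index x. For the first claim, x may depend on r; with
   t = 2 log (2|r|) we use g_x^2 <= t + sum_j (g_j^2 - t)^+ and the exponential-moment bound
   E (Z^2 - t)^+ <= 4 exp (-t/2) = 2/|r| for a standard normal Z, which gives E g_x^2 <= t + 2.
   For the second claim, x = f r is independent of r', so E g'_x^2 = sum_j P(x = j) E g'_j^2 <= 1,
   and the triangle inequality through mu_x adds the two estimates. *)

section \<open>Cauchy-Schwarz and random indices\<close>

lemma le_sqrt_mult_of_amgm:
  fixes L A K :: real
  assumes "0 \<le> A" and "0 \<le> K" and amgm: "\<And>a. 0 < a \<Longrightarrow> L \<le> (a * A + K / a) / 2"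
  shows "L \<le> sqrt (A * K)"
proof (cases "A = 0 \<or> K = 0")
  case True
  show ?thesis
  proof (rule ccontr)
    assume "\<not> L \<le> sqrt (A * K)"
    with True have "0 < L" by auto
    show False
    proof (cases "A = 0")
      case True
      have "L \<le> K * L / (2 * (K + L))"
        using amgm[of "(K + L) / L"] \<open>0 < L\<close> \<open>0 \<le> K\<close> True by (simp add: field_simps)
      also have "\<dots> < L"
        using \<open>0 < L\<close> \<open>0 \<le> K\<close> by (simp add: field_simps add_nonneg_pos)
      finally show False by simp
    next
      case False
      with \<open>A = 0 \<or> K = 0\<close> have "K = 0" by simp
      have "L \<le> L * A / (2 * (A + 1))"
        using amgm[of "L / (A + 1)"] \<open>0 < L\<close> \<open>0 \<le> A\<close> \<open>K = 0\<close> by (simp add: field_simps)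
      also have "\<dots> < L"
        using \<open>0 < L\<close> \<open>0 \<le> A\<close> by (simp add: field_simps add_nonneg_pos)
      finally show False by simp
    qed
  qed
next
  case False
  then have "0 < A" "0 < K" using assms by auto
  then have "sqrt (K / A) * A = sqrt (A * K)" and "K / sqrt (K / A) = sqrt (A * K)"
    by (simp_all add: real_sqrt_divide real_sqrt_mult field_simps)
  then show ?thesis
    using amgm[of "sqrt (K / A)"] \<open>0 < A\<close> \<open>0 < K\<close> by simp
qed

lemma integral_abs_mult_le_sqrt:
  fixes u v :: "'a \<Rightarrow> real"
  assumes [measurable]: "u \<in> borel_measurable M" "v \<in> borel_measurable M"
    and u2: "integrable M (\<lambda>x. (u x)\<^sup>2)" and v2: "integrable M (\<lambda>x. (v x)\<^sup>2)"
  shows "(LINT x|M. \<bar>u x * v x\<bar>) \<le> sqrt ((LINT x|M. (u x)\<^sup>2) * (LINT x|M. (v x)\<^sup>2))"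
proof (rule le_sqrt_mult_of_amgm)
  have amgm: "\<bar>u x * v x\<bar> \<le> (a * (u x)\<^sup>2 + (v x)\<^sup>2 / a) / 2" if "0 < a" for a x
  proof -
    have "0 \<le> (a * \<bar>u x\<bar> - \<bar>v x\<bar>)\<^sup>2 / a" using that by simp
    then show ?thesis using that by (simp add: power2_eq_square field_simps abs_mult)
  qed
  have bound: "integrable M (\<lambda>x. (a * (u x)\<^sup>2 + (v x)\<^sup>2 / a) / 2)" for a
    using u2 v2 by simp
  have int: "integrable M (\<lambda>x. \<bar>u x * v x\<bar>)"
    using amgm[of 1] by (intro Bochner_Integration.integrable_bound[OF bound[of 1]]) auto
  fix a :: real
  assume "0 < a"
  have "(LINT x|M. \<bar>u x * v x\<bar>) \<le> (LINT x|M. (a * (u x)\<^sup>2 + (v x)\<^sup>2 / a) / 2)"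
    using amgm[OF \<open>0 < a\<close>] by (intro integral_mono[OF int bound])
  also have "\<dots> = (a * (LINT x|M. (u x)\<^sup>2) + (LINT x|M. (v x)\<^sup>2) / a) / 2"
    using u2 v2 by simp
  finally show "(LINT x|M. \<bar>u x * v x\<bar>) \<le> (a * (LINT x|M. (u x)\<^sup>2) + (LINT x|M. (v x)\<^sup>2) / a) / 2" .
qed simp_all

lemma borel_measurable_select:
  fixes F :: "'i::finite \<Rightarrow> 'a \<Rightarrow> real"
  assumes "\<And>j. F j \<in> borel_measurable M" and x: "x \<in> measurable M (count_space UNIV)"
  shows "(\<lambda>\<omega>. F (x \<omega>) \<omega>) \<in> borel_measurable M"
  by (rule measurable_compose_countable'[OF _ x]) (auto intro: assms(1))

lemma integrable_select:
  fixes F :: "'i::finite \<Rightarrow> 'a \<Rightarrow> real"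
  assumes x: "x \<in> measurable M (count_space UNIV)" and F: "\<And>j. integrable M (F j)"
  shows "integrable M (\<lambda>\<omega>. F (x \<omega>) \<omega>)"
proof (rule Bochner_Integration.integrable_bound)
  show "integrable M (\<lambda>\<omega>. \<Sum>j\<in>UNIV. \<bar>F j \<omega>\<bar>)" using F by auto
  show "(\<lambda>\<omega>. F (x \<omega>) \<omega>) \<in> borel_measurable M"
    using F by (rule borel_measurable_select[OF borel_measurable_integrable x])
  have "\<bar>F (x \<omega>) \<omega>\<bar> \<le> (\<Sum>j\<in>UNIV. \<bar>F j \<omega>\<bar>)" for \<omega>
    by (rule member_le_sum[where f = "\<lambda>j. \<bar>F j \<omega>\<bar>"]) simp_all
  then show "AE \<omega> in M. norm (F (x \<omega>) \<omega>) \<le> norm (\<Sum>j\<in>UNIV. \<bar>F j \<omega>\<bar>)"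
    by (simp add: sum_nonneg)
qed

lemma (in finite_measure) integral_abs_select_diff_le:
  fixes r r' :: "'a \<Rightarrow> real^'n" and x :: "'a \<Rightarrow> 'n"
  assumes x: "x \<in> measurable M (count_space UNIV)"
    and r: "\<And>j. integrable M (\<lambda>\<omega>. r \<omega> $ j)" and r': "\<And>j. integrable M (\<lambda>\<omega>. r' \<omega> $ j)"
  shows "(LINT \<omega>|M. \<bar>r \<omega> $ x \<omega> - r' \<omega> $ x \<omega>\<bar>)
    \<le> (LINT \<omega>|M. \<bar>r \<omega> $ x \<omega> - \<mu> $ x \<omega>\<bar>) + (LINT \<omega>|M. \<bar>r' \<omega> $ x \<omega> - \<mu> $ x \<omega>\<bar>)"
proof -
  have "integrable M (\<lambda>\<omega>. \<bar>r \<omega> $ x \<omega> - r' \<omega> $ x \<omega>\<bar>)"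
    by (rule integrable_select[OF x, where F = "\<lambda>j \<omega>. \<bar>r \<omega> $ j - r' \<omega> $ j\<bar>"]) (use r r' in auto)
  moreover have dev: "integrable M (\<lambda>\<omega>. \<bar>r \<omega> $ x \<omega> - \<mu> $ x \<omega>\<bar>)"
    by (rule integrable_select[OF x, where F = "\<lambda>j \<omega>. \<bar>r \<omega> $ j - \<mu> $ j\<bar>"]) (use r in auto)
  moreover have dev': "integrable M (\<lambda>\<omega>. \<bar>r' \<omega> $ x \<omega> - \<mu> $ x \<omega>\<bar>)"
    by (rule integrable_select[OF x, where F = "\<lambda>j \<omega>. \<bar>r' \<omega> $ j - \<mu> $ j\<bar>"]) (use r' in auto)
  ultimately have "(LINT \<omega>|M. \<bar>r \<omega> $ x \<omega> - r' \<omega> $ x \<omega>\<bar>)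
      \<le> (LINT \<omega>|M. \<bar>r \<omega> $ x \<omega> - \<mu> $ x \<omega>\<bar> + \<bar>r' \<omega> $ x \<omega> - \<mu> $ x \<omega>\<bar>)"
    by (intro integral_mono) auto
  then show ?thesis
    by (simp only: Bochner_Integration.integral_add[OF dev dev'])
qed

context prob_space
begin

lemma integral_select_le_excess:
  fixes F :: "'i::finite \<Rightarrow> 'a \<Rightarrow> real"
  assumes x: "x \<in> measurable M (count_space UNIV)" and F: "\<And>j. integrable M (F j)"
  shows "(LINT \<omega>|M. F (x \<omega>) \<omega>) \<le> t + (\<Sum>j\<in>UNIV. LINT \<omega>|M. max 0 (F j \<omega> - t))"
proof -
  have excess: "integrable M (\<lambda>\<omega>. max 0 (F j \<omega> - t))" for j
    using F by auto
  have "F (x \<omega>) \<omega> \<le> t + (\<Sum>j\<in>UNIV. max 0 (F j \<omega> - t))" for \<omega>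
    using member_le_sum[of "x \<omega>" UNIV "\<lambda>j. max 0 (F j \<omega> - t)"] by simp
  then have "(LINT \<omega>|M. F (x \<omega>) \<omega>) \<le> (LINT \<omega>|M. t + (\<Sum>j\<in>UNIV. max 0 (F j \<omega> - t)))"
    using excess by (intro integral_mono integrable_select[OF x F]) auto
  also have "\<dots> = t + (\<Sum>j\<in>UNIV. LINT \<omega>|M. max 0 (F j \<omega> - t))"
    using excess by (simp add: prob_space)
  finally show ?thesis .
qed

lemma integral_select_indep_le:
  fixes \<phi> :: "'i::finite \<Rightarrow> 'c \<Rightarrow> real"
  assumes indep: "indep_var N1 X N2 Y" and [measurable]: "f \<in> measurable N1 (count_space UNIV)"
    and \<phi>: "\<And>j. \<phi> j \<in> borel_measurable N2" and \<phi>_int: "\<And>j. integrable M (\<lambda>\<omega>. \<phi> j (Y \<omega>))"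
    and \<phi>_le: "\<And>j. (LINT \<omega>|M. \<phi> j (Y \<omega>)) \<le> c"
  shows "(LINT \<omega>|M. \<phi> (f (X \<omega>)) (Y \<omega>)) \<le> c"
proof -
  define I where "I = (\<lambda>j \<omega>. of_bool (f (X \<omega>) = j) :: real)"
  have [measurable]: "X \<in> measurable M N1" using indep by (rule indep_var_rv1)
  have [measurable]: "I j \<in> borel_measurable M" for j
    unfolding I_def by measurable
  have I_int: "integrable M (I j)" for j
    by (rule integrable_const_bound[where B = 1]) (auto simp: I_def)
  have I_indep: "indep_var borel (I j) borel (\<lambda>\<omega>. \<phi> j (Y \<omega>))" for j
  proof -
    have "indep_var borel ((\<lambda>v. of_bool (f v = j) :: real) \<circ> X) borel (\<phi> j \<circ> Y)"
      using \<phi> by (intro indep_var_compose[OF indep]) auto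
    then show ?thesis by (simp add: I_def comp_def)
  qed
  have "(LINT \<omega>|M. \<phi> (f (X \<omega>)) (Y \<omega>)) = (LINT \<omega>|M. (\<Sum>j\<in>UNIV. I j \<omega> * \<phi> j (Y \<omega>)))"
    by (simp add: I_def)
  also have "\<dots> = (\<Sum>j\<in>UNIV. (LINT \<omega>|M. I j \<omega>) * (LINT \<omega>|M. \<phi> j (Y \<omega>)))"
    using I_indep I_int \<phi>_int
    by (simp add: Bochner_Integration.integral_sum indep_var_integrable indep_var_lebesgue_integral)
  also have "\<dots> \<le> (\<Sum>j\<in>UNIV. (LINT \<omega>|M. I j \<omega>) * c)"
    using \<phi>_le by (intro sum_mono mult_left_mono) (simp_all add: I_def)
  also have "\<dots> = (LINT \<omega>|M. (\<Sum>j\<in>UNIV. I j \<omega>)) * c"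
    using I_int by (simp add: Bochner_Integration.integral_sum sum_distrib_right)
  also have "\<dots> = c"
    by (simp add: I_def prob_space)
  finally show ?thesis .
qed

end

section \<open>Tails of the standard normal distribution\<close>

lemma std_normal_density_mult_exp:
  "std_normal_density y * exp (s * y) = exp (s\<^sup>2 / 2) * normal_density s 1 y"
proof -
  have "- y\<^sup>2 / 2 + s * y = s\<^sup>2 / 2 + - (y - s)\<^sup>2 / 2"
    by (simp add: power2_eq_square field_simps)
  then show ?thesis
    unfolding normal_density_def by (simp add: exp_add[symmetric])
qed

lemma
  shows integrable_std_normal_exp: "integrable std_normal_distribution (\<lambda>y. exp (s * y))"
    and integral_std_normal_exp: "(LINT y|std_normal_distribution. exp (s * y)) = exp (s\<^sup>2 / 2)"
  by (simp_all add: integrable_density integral_density std_normal_density_mult_exp)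

lemma sq_excess_le_exp:
  fixes y t :: real
  assumes "1 \<le> t"
  shows "max 0 (y\<^sup>2 - t) \<le> 2 * exp (- t) * (exp (sqrt t * y) + exp (- sqrt t * y))"
proof -
  define s where "s = sqrt t"
  have s: "1 \<le> s" "s\<^sup>2 = t" using assms by (auto simp: s_def)
  have "max 0 (y\<^sup>2 - t) \<le> 2 * exp (- t) * exp (s * \<bar>y\<bar>)"
  proof (cases "s \<le> \<bar>y\<bar>")
    case True
    define z where "z = s * (\<bar>y\<bar> - s)"
    have "0 \<le> z" using True s by (simp add: z_def)
    have "y\<^sup>2 - t = (\<bar>y\<bar> - s)\<^sup>2 + 2 * s * (\<bar>y\<bar> - s)"
      using s by (simp add: power2_eq_square algebra_simps)
    also have "\<dots> \<le> z\<^sup>2 + 2 * z"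
    proof -
      have "1 * (\<bar>y\<bar> - s)\<^sup>2 \<le> s\<^sup>2 * (\<bar>y\<bar> - s)\<^sup>2"
        using s assms by (intro mult_right_mono) simp_all
      then show ?thesis by (simp add: z_def power_mult_distrib)
    qed
    also have "\<dots> \<le> 2 * (exp z - 1)"
      using exp_lower_Taylor_quadratic[OF \<open>0 \<le> z\<close>] by simp
    also have "\<dots> \<le> 2 * exp (- t) * exp (s * \<bar>y\<bar>)"
      using s by (simp add: z_def exp_add[symmetric] algebra_simps power2_eq_square)
    finally show ?thesis by simp
  next
    case False
    then have "y\<^sup>2 \<le> t"
      using s abs_le_square_iff[of y s] by simp
    then show ?thesis by simp
  qed
  also have "exp (s * \<bar>y\<bar>) \<le> exp (s * y) + exp (- s * y)"
    by (cases "0 \<le> y") (simp_all add: add_increasing add_increasing2)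
  finally show ?thesis
    by (simp add: s_def mult_left_mono)
qed

lemma
  fixes t :: real
  assumes "1 \<le> t"
  shows integrable_std_normal_sq_excess:
      "integrable std_normal_distribution (\<lambda>y. max 0 (y\<^sup>2 - t))"
    and integral_std_normal_sq_excess_le:
      "(LINT y|std_normal_distribution. max 0 (y\<^sup>2 - t)) \<le> 4 * exp (- t / 2)"
proof -
  let ?B = "\<lambda>y. 2 * exp (- t) * (exp (sqrt t * y) + exp (- sqrt t * y))"
  have B: "integrable std_normal_distribution ?B"
    by (intro integrable_mult_right Bochner_Integration.integrable_add integrable_std_normal_exp)
  show int: "integrable std_normal_distribution (\<lambda>y. max 0 (y\<^sup>2 - t))"
    using sq_excess_le_exp[OF assms]
    by (intro Bochner_Integration.integrable_bound[OF B]) (auto simp: abs_le_iff)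
  have "(LINT y|std_normal_distribution. max 0 (y\<^sup>2 - t)) \<le> (LINT y|std_normal_distribution. ?B y)"
    using sq_excess_le_exp[OF assms] by (intro integral_mono[OF int B])
  also have "\<dots> = 2 * exp (- t) * (exp (t / 2) + exp (t / 2))"
    using assms integral_std_normal_exp[of "sqrt t"] integral_std_normal_exp[of "- sqrt t"]
      integrable_std_normal_exp[of "sqrt t"] integrable_std_normal_exp[of "- sqrt t"]
    by simp
  also have "\<dots> = 4 * exp (- t / 2)"
    by (simp add: exp_add[symmetric])
  finally show "(LINT y|std_normal_distribution. max 0 (y\<^sup>2 - t)) \<le> 4 * exp (- t / 2)" .
qed

section \<open>Coordinates of Gaussian vectors\<close>

lemma char_distr_mult:
  assumes "sets N = sets borel"
  shows "char (distr N borel (\<lambda>x. c * x)) u = char N (c * u)"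
  unfolding char_def using assms by (subst integral_distr) (auto simp: ac_simps)

lemma borel_measurable_vec_nth[measurable (raw)]:
  "r \<in> borel_measurable M \<Longrightarrow> (\<lambda>x. (r x :: real^'n) $ i) \<in> borel_measurable M"
  by (rule measurable_compose[OF _ borel_measurable_nth])

lemma inner_axis_mult_axis: "axis i u \<bullet> ((\<Sigma>::real^'n^'n) *v axis i u) = u\<^sup>2 * \<Sigma> $ i $ i"
proof -
  have "(\<Sigma> *v axis i u) $ i = \<Sigma> $ i $ i * u"
    by (simp add: matrix_vector_mult_def axis_def if_distrib cong: if_cong)
  then show ?thesis by (simp add: inner_axis' power2_eq_square)
qed

lemma gaussian_vec_measurable: "gaussian_vec M r \<mu> \<Sigma> \<Longrightarrow> r \<in> borel_measurable M"
  by (simp add: gaussian_vec_def)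

lemma gaussian_vec_diag_nonneg: "gaussian_vec M r \<mu> \<Sigma> \<Longrightarrow> 0 \<le> \<Sigma> $ i $ i"
  unfolding gaussian_vec_def using inner_axis_mult_axis[of i 1 \<Sigma>] by (metis power_one mult_1)

lemma distr_gaussian_vec_coordinate:
  assumes "prob_space M" and G: "gaussian_vec M r \<mu> \<Sigma>"
  shows "distr M borel (\<lambda>\<omega>. r \<omega> $ i - \<mu> $ i)
       = distr std_normal_distribution borel (\<lambda>y. sqrt (\<Sigma> $ i $ i) * y)"
proof (rule Levy_uniqueness)
  interpret prob_space M by fact
  have [measurable]: "r \<in> borel_measurable M" using G by (rule gaussian_vec_measurable)
  show "real_distribution (distr M borel (\<lambda>\<omega>. r \<omega> $ i - \<mu> $ i))"
    by (intro real_distribution_distr) simp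
  show "real_distribution (distr std_normal_distribution borel (\<lambda>y. sqrt (\<Sigma> $ i $ i) * y))"
    using real_dist_normal_dist
    by (intro prob_space.real_distribution_distr) (auto simp: real_distribution_def)
  show "char (distr M borel (\<lambda>\<omega>. r \<omega> $ i - \<mu> $ i))
      = char (distr std_normal_distribution borel (\<lambda>y. sqrt (\<Sigma> $ i $ i) * y))"
  proof
    fix u :: real
    have cf: "(CLINT \<omega>|M. cis (axis i u \<bullet> r \<omega>))
        = cis (axis i u \<bullet> \<mu>) * exp (- (axis i u \<bullet> (\<Sigma> *v axis i u)) / 2)"
      using G unfolding gaussian_vec_def by blast
    have "iexp (u * (r \<omega> $ i - \<mu> $ i)) = cis (- (u * \<mu> $ i)) * cis (axis i u \<bullet> r \<omega>)" for \<omega>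
      unfolding cis_conv_exp[symmetric] by (simp add: cis_mult inner_axis' algebra_simps)
    then have "char (distr M borel (\<lambda>\<omega>. r \<omega> $ i - \<mu> $ i)) u
        = cis (- (u * \<mu> $ i)) * (CLINT \<omega>|M. cis (axis i u \<bullet> r \<omega>))"
      unfolding char_def by (subst integral_distr) auto
    also have "\<dots> = cis (- (u * \<mu> $ i)) * cis (u * \<mu> $ i) * exp (- (u\<^sup>2 * \<Sigma> $ i $ i) / 2)"
      unfolding cf inner_axis_mult_axis by (simp add: inner_axis')
    also have "\<dots> = exp (- (sqrt (\<Sigma> $ i $ i) * u)\<^sup>2 / 2)"
      using gaussian_vec_diag_nonneg[OF G, of i]
      by (simp add: power_mult_distrib mult.commute mult.left_commute cis_mult)
    also have "\<dots> = char (distr std_normal_distribution borel (\<lambda>y. sqrt (\<Sigma> $ i $ i) * y)) u"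
      by (simp add: char_distr_mult char_std_normal_distribution)
    finally show "char (distr M borel (\<lambda>\<omega>. r \<omega> $ i - \<mu> $ i)) u
        = char (distr std_normal_distribution borel (\<lambda>y. sqrt (\<Sigma> $ i $ i) * y)) u" .
  qed
qed

lemma
  fixes \<phi> :: "real \<Rightarrow> real"
  assumes "prob_space M" and "gaussian_vec M r \<mu> \<Sigma>" and [measurable]: "\<phi> \<in> borel_measurable borel"
  shows integrable_gaussian_coordinate_iff:
      "integrable M (\<lambda>\<omega>. \<phi> (r \<omega> $ i - \<mu> $ i))
       \<longleftrightarrow> integrable std_normal_distribution (\<lambda>y. \<phi> (sqrt (\<Sigma> $ i $ i) * y))"
    and integral_gaussian_coordinate:
      "(LINT \<omega>|M. \<phi> (r \<omega> $ i - \<mu> $ i))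
       = (LINT y|std_normal_distribution. \<phi> (sqrt (\<Sigma> $ i $ i) * y))"
proof -
  have [measurable]: "r \<in> borel_measurable M" using assms(2) by (rule gaussian_vec_measurable)
  note law = distr_gaussian_vec_coordinate[OF assms(1,2), of i]
  show "integrable M (\<lambda>\<omega>. \<phi> (r \<omega> $ i - \<mu> $ i))
       \<longleftrightarrow> integrable std_normal_distribution (\<lambda>y. \<phi> (sqrt (\<Sigma> $ i $ i) * y))"
    using integrable_distr_eq[of "\<lambda>\<omega>. r \<omega> $ i - \<mu> $ i" M borel \<phi>]
      integrable_distr_eq[of "\<lambda>y. sqrt (\<Sigma> $ i $ i) * y" std_normal_distribution borel \<phi>]
    by (simp add: law)
  show "(LINT \<omega>|M. \<phi> (r \<omega> $ i - \<mu> $ i))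
       = (LINT y|std_normal_distribution. \<phi> (sqrt (\<Sigma> $ i $ i) * y))"
    using integral_distr[of "\<lambda>\<omega>. r \<omega> $ i - \<mu> $ i" M borel \<phi>]
      integral_distr[of "\<lambda>y. sqrt (\<Sigma> $ i $ i) * y" std_normal_distribution borel \<phi>]
    by (simp add: law)
qed

lemma AE_gaussian_coordinate_iff:
  assumes "prob_space M" and "gaussian_vec M r \<mu> \<Sigma>" and [measurable]: "Measurable.pred borel P"
  shows "(AE \<omega> in M. P (r \<omega> $ i - \<mu> $ i))
       \<longleftrightarrow> (AE y in std_normal_distribution. P (sqrt (\<Sigma> $ i $ i) * y))"
proof -
  have [measurable]: "r \<in> borel_measurable M" using assms(2) by (rule gaussian_vec_measurable)
  have "(AE \<omega> in M. P (r \<omega> $ i - \<mu> $ i)) \<longleftrightarrow> (AE v in distr M borel (\<lambda>\<omega>. r \<omega> $ i - \<mu> $ i). P v)"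
    by (simp add: AE_distr_iff)
  also have "\<dots> \<longleftrightarrow> (AE v in distr std_normal_distribution borel (\<lambda>y. sqrt (\<Sigma> $ i $ i) * y). P v)"
    by (simp only: distr_gaussian_vec_coordinate[OF assms(1,2)])
  also have "\<dots> \<longleftrightarrow> (AE y in std_normal_distribution. P (sqrt (\<Sigma> $ i $ i) * y))"
    by (simp add: AE_distr_iff)
  finally show ?thesis .
qed

lemma integrable_gaussian_vec_coordinate:
  assumes "prob_space M" and "gaussian_vec M r \<mu> \<Sigma>"
  shows "integrable M (\<lambda>\<omega>. r \<omega> $ i)"
proof -
  interpret prob_space M by fact
  have "integrable std_normal_distribution (\<lambda>y. sqrt (\<Sigma> $ i $ i) * y)"
    using integrable_std_normal_distribution_moment[of 1] by simp
  then have "integrable M (\<lambda>\<omega>. r \<omega> $ i - \<mu> $ i)"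
    using integrable_gaussian_coordinate_iff[OF assms, of "\<lambda>v. v" i] by simp
  then have "integrable M (\<lambda>\<omega>. (r \<omega> $ i - \<mu> $ i) + \<mu> $ i)"
    by (intro Bochner_Integration.integrable_add) auto
  then show ?thesis by simp
qed

text \<open>For a degenerate coordinate (\<open>\<Sigma> $ i $ i = 0\<close>) this is \<open>0\<close> by the convention
  \<open>x / 0 = 0\<close>; that coordinate is then almost surely equal to its mean.\<close>

definition standardized_coord :: "real^'n \<Rightarrow> real^'n^'n \<Rightarrow> 'n \<Rightarrow> real^'n \<Rightarrow> real" where
  "standardized_coord \<mu> \<Sigma> i v = (v $ i - \<mu> $ i) / sqrt (\<Sigma> $ i $ i)"

lemma borel_measurable_standardized_coord[measurable]:
  "standardized_coord \<mu> \<Sigma> i \<in> borel_measurable borel"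
  unfolding standardized_coord_def by measurable

lemma AE_gaussian_coordinate_eq_standardized:
  assumes "prob_space M" and "gaussian_vec M r \<mu> \<Sigma>"
  shows "AE \<omega> in M. r \<omega> $ i - \<mu> $ i = sqrt (\<Sigma> $ i $ i) * standardized_coord \<mu> \<Sigma> i (r \<omega>)"
  using AE_gaussian_coordinate_iff[OF assms, of "\<lambda>v. v = sqrt (\<Sigma> $ i $ i) * (v / sqrt (\<Sigma> $ i $ i))" i]
  by (simp add: standardized_coord_def)

lemma
  fixes \<psi> :: "real \<Rightarrow> real"
  assumes "prob_space M" and "gaussian_vec M r \<mu> \<Sigma>"
    and [measurable]: "\<psi> \<in> borel_measurable borel" and "integrable std_normal_distribution \<psi>"
    and "\<psi> 0 \<le> (LINT y|std_normal_distribution. \<psi> y)"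
  shows integrable_standardized_coord: "integrable M (\<lambda>\<omega>. \<psi> (standardized_coord \<mu> \<Sigma> i (r \<omega>)))"
    and integral_standardized_coord_le:
      "(LINT \<omega>|M. \<psi> (standardized_coord \<mu> \<Sigma> i (r \<omega>))) \<le> (LINT y|std_normal_distribution. \<psi> y)"
proof -
  interpret prob_space M by fact
  have "integrable M (\<lambda>\<omega>. \<psi> (standardized_coord \<mu> \<Sigma> i (r \<omega>)))
    \<and> (LINT \<omega>|M. \<psi> (standardized_coord \<mu> \<Sigma> i (r \<omega>))) \<le> (LINT y|std_normal_distribution. \<psi> y)"
  proof (cases "\<Sigma> $ i $ i = 0")
    case True
    then show ?thesis using assms(5) by (simp add: standardized_coord_def prob_space)
  next
    case False
    then have "(\<lambda>y. \<psi> (sqrt (\<Sigma> $ i $ i) * y / sqrt (\<Sigma> $ i $ i))) = \<psi>" by simp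
    then show ?thesis
      using integrable_gaussian_coordinate_iff[OF assms(1,2), of "\<lambda>v. \<psi> (v / sqrt (\<Sigma> $ i $ i))" i]
        integral_gaussian_coordinate[OF assms(1,2), of "\<lambda>v. \<psi> (v / sqrt (\<Sigma> $ i $ i))" i] assms(4)
      by (simp add: standardized_coord_def)
  qed
  then show "integrable M (\<lambda>\<omega>. \<psi> (standardized_coord \<mu> \<Sigma> i (r \<omega>)))"
    and "(LINT \<omega>|M. \<psi> (standardized_coord \<mu> \<Sigma> i (r \<omega>))) \<le> (LINT y|std_normal_distribution. \<psi> y)"
    by auto
qed

lemma
  assumes "prob_space M" and "gaussian_vec M r \<mu> \<Sigma>"
  shows integrable_sq_standardized_coord:
      "integrable M (\<lambda>\<omega>. (standardized_coord \<mu> \<Sigma> i (r \<omega>))\<^sup>2)"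
    and integral_sq_standardized_coord_le:
      "(LINT \<omega>|M. (standardized_coord \<mu> \<Sigma> i (r \<omega>))\<^sup>2) \<le> 1"
  using std_normal_distribution_even_moments[of 1]
    integrable_standardized_coord[OF assms, of "\<lambda>y. y\<^sup>2"]
    integral_standardized_coord_le[OF assms, of "\<lambda>y. y\<^sup>2"]
  by (simp_all add: numeral_2_eq_2)

lemma integral_abs_gaussian_select_le:
  fixes x :: "'a \<Rightarrow> 'n::finite"
  assumes "prob_space M" and G: "gaussian_vec M r \<mu> \<Sigma>"
    and x: "x \<in> measurable M (count_space UNIV)"
  shows "(LINT \<omega>|M. \<bar>r \<omega> $ x \<omega> - \<mu> $ x \<omega>\<bar>)
    \<le> sqrt ((LINT \<omega>|M. (sqrt (\<Sigma> $ x \<omega> $ x \<omega>))\<^sup>2)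
           * (LINT \<omega>|M. (standardized_coord \<mu> \<Sigma> (x \<omega>) (r \<omega>))\<^sup>2))"
proof -
  interpret prob_space M by fact
  have [measurable]: "r \<in> borel_measurable M" using G by (rule gaussian_vec_measurable)
  let ?u = "\<lambda>\<omega>. sqrt (\<Sigma> $ x \<omega> $ x \<omega>)" and ?v = "\<lambda>\<omega>. standardized_coord \<mu> \<Sigma> (x \<omega>) (r \<omega>)"
  have "AE \<omega> in M. \<forall>j\<in>UNIV. r \<omega> $ j - \<mu> $ j = sqrt (\<Sigma> $ j $ j) * standardized_coord \<mu> \<Sigma> j (r \<omega>)"
    by (intro AE_finite_allI AE_gaussian_coordinate_eq_standardized[OF assms(1) G]) simp
  moreover have "(\<lambda>\<omega>. \<bar>r \<omega> $ x \<omega> - \<mu> $ x \<omega>\<bar>) \<in> borel_measurable M"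
    by (rule borel_measurable_select[OF _ x]) measurable
  moreover have v_meas: "?v \<in> borel_measurable M"
    by (rule borel_measurable_select[OF _ x]) measurable
  moreover have u_meas: "?u \<in> borel_measurable M"
    by (rule borel_measurable_select[OF _ x]) measurable
  ultimately have "(LINT \<omega>|M. \<bar>r \<omega> $ x \<omega> - \<mu> $ x \<omega>\<bar>) = (LINT \<omega>|M. \<bar>?u \<omega> * ?v \<omega>\<bar>)"
    by (intro integral_cong_AE) auto
  also have "\<dots> \<le> sqrt ((LINT \<omega>|M. (?u \<omega>)\<^sup>2) * (LINT \<omega>|M. (?v \<omega>)\<^sup>2))"
  proof (rule integral_abs_mult_le_sqrt)
    show "integrable M (\<lambda>\<omega>. (?u \<omega>)\<^sup>2)"
      by (rule integrable_select[OF x, where F = "\<lambda>j _. (sqrt (\<Sigma> $ j $ j))\<^sup>2"]) simp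
    show "integrable M (\<lambda>\<omega>. (?v \<omega>)\<^sup>2)"
      by (rule integrable_select[OF x integrable_sq_standardized_coord[OF assms(1) G]])
  qed (fact u_meas v_meas)+
  finally show ?thesis .
qed

lemma integral_sq_standardized_select_le:
  fixes x :: "'a \<Rightarrow> 'n::finite"
  assumes "prob_space M" and G: "gaussian_vec M r \<mu> \<Sigma>"
    and x: "x \<in> measurable M (count_space UNIV)"
  shows "(LINT \<omega>|M. (standardized_coord \<mu> \<Sigma> (x \<omega>) (r \<omega>))\<^sup>2) \<le> 2 * ln (2 * real CARD('n)) + 2"
proof -
  interpret prob_space M by fact
  define t where "t = 2 * ln (2 * real CARD('n))"
  have "ln 2 \<le> ln (2 * real CARD('n))"
    by (simp add: Suc_le_eq)
  then have "1 \<le> t"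
    using ln2_ge_two_thirds unfolding t_def by linarith
  have tail: "(LINT \<omega>|M. max 0 ((standardized_coord \<mu> \<Sigma> j (r \<omega>))\<^sup>2 - t)) \<le> 4 * exp (- t / 2)" for j
    using \<open>1 \<le> t\<close> integrable_std_normal_sq_excess[of t] integral_std_normal_sq_excess_le[of t]
      integral_standardized_coord_le[OF assms(1) G, of "\<lambda>y. max 0 (y\<^sup>2 - t)" j]
    by (simp add: integral_nonneg)
  have "(LINT \<omega>|M. (standardized_coord \<mu> \<Sigma> (x \<omega>) (r \<omega>))\<^sup>2)
      \<le> t + (\<Sum>j\<in>UNIV. LINT \<omega>|M. max 0 ((standardized_coord \<mu> \<Sigma> j (r \<omega>))\<^sup>2 - t))"
    by (rule integral_select_le_excess[OF x integrable_sq_standardized_coord[OF assms(1) G]])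
  also have "\<dots> \<le> t + (\<Sum>j\<in>(UNIV::'n set). 4 * exp (- t / 2))"
    by (intro add_left_mono sum_mono tail)
  also have "\<dots> = t + 2"
    by (simp add: t_def exp_minus)
  finally show ?thesis by (simp add: t_def)
qed

theorem lemmaD1:
  fixes M :: "'a measure"
    and r r' :: "'a \<Rightarrow> real^'n"
    and \<mu> :: "real^'n" and \<Sigma> :: "real^'n^'n"
    and f :: "real^'n \<Rightarrow> 'n"
  assumes "prob_space M"
    and "gaussian_vec M r \<mu> \<Sigma>"
    and "gaussian_vec M r' \<mu> \<Sigma>"
    and "prob_space.indep_var M borel r borel r'"
    and "f \<in> measurable borel (count_space UNIV)"
  shows "(LINT \<omega>|M. \<bar>r \<omega> $ f (r \<omega>) - \<mu> $ f (r \<omega>)\<bar>)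
           \<le> sqrt ((LINT \<omega>|M. (sqrt (\<Sigma> $ f (r \<omega>) $ f (r \<omega>)))\<^sup>2)
                   * (2 * ln (2 * real CARD('n)) + 2))
         \<and> (LINT \<omega>|M. \<bar>r \<omega> $ f (r \<omega>) - r' \<omega> $ f (r \<omega>)\<bar>)
           \<le> (1 + sqrt (2 * ln (2 * real CARD('n)) + 2))
              * sqrt (LINT \<omega>|M. (sqrt (\<Sigma> $ f (r \<omega>) $ f (r \<omega>)))\<^sup>2)"
proof -
  interpret prob_space M by fact
  note G = assms(2) and G' = assms(3)
  have [measurable]: "r \<in> borel_measurable M" "f \<in> borel \<rightarrow>\<^sub>M count_space UNIV"
    using G assms(5) by (simp_all add: gaussian_vec_measurable)
  have x: "(\<lambda>\<omega>. f (r \<omega>)) \<in> measurable M (count_space UNIV)" by measurable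
  define A where "A = (LINT \<omega>|M. (sqrt (\<Sigma> $ f (r \<omega>) $ f (r \<omega>)))\<^sup>2)"
  define B where "B = 2 * ln (2 * real CARD('n)) + 2"
  have "0 \<le> A" by (simp add: A_def)
  have "(LINT \<omega>|M. (standardized_coord \<mu> \<Sigma> (f (r \<omega>)) (r' \<omega>))\<^sup>2) \<le> 1"
    by (rule integral_select_indep_le[OF assms(4,5),
          where \<phi> = "\<lambda>j v. (standardized_coord \<mu> \<Sigma> j v)\<^sup>2"])
      (simp_all add: integrable_sq_standardized_coord[OF assms(1) G']
         integral_sq_standardized_coord_le[OF assms(1) G'])
  then have dev': "(LINT \<omega>|M. \<bar>r' \<omega> $ f (r \<omega>) - \<mu> $ f (r \<omega>)\<bar>) \<le> sqrt A"
    using integral_abs_gaussian_select_le[OF assms(1) G' x] \<open>0 \<le> A\<close> unfolding A_def[symmetric]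
    by (meson mult_left_le order_trans real_sqrt_le_mono)
  have dev: "(LINT \<omega>|M. \<bar>r \<omega> $ f (r \<omega>) - \<mu> $ f (r \<omega>)\<bar>) \<le> sqrt (A * B)"
    using integral_abs_gaussian_select_le[OF assms(1) G x] integral_sq_standardized_select_le[OF assms(1) G x]
      \<open>0 \<le> A\<close> unfolding A_def[symmetric] B_def[symmetric]
    by (meson mult_left_mono order_trans real_sqrt_le_mono)
  have "(LINT \<omega>|M. \<bar>r \<omega> $ f (r \<omega>) - r' \<omega> $ f (r \<omega>)\<bar>) \<le> sqrt (A * B) + sqrt A"
    using integral_abs_select_diff_le[OF x, of r r' \<mu>] dev dev'
      integrable_gaussian_vec_coordinate[OF assms(1) G] integrable_gaussian_vec_coordinate[OF assms(1) G']
    by fastforce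
  then show ?thesis
    using dev unfolding A_def[symmetric] B_def[symmetric]
    by (simp add: real_sqrt_mult algebra_simps)
qed

end
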